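(* Let $a,x$ be integers with $3\le a\le x$, let $\lambda=(x,x,ax)$ and $n=x(a+2)$, and suppose $n-1$ is coprime to both $a$ and $x$. For $1\le i\le n-2$ write uniquely $i=(a+2)r_i+p_i$ with integers $0\le r_i<x$ and $0\le p_i<a+2$, let $f(i)=ar_i-(2x-1)p_i$, and for $s\in\mathbb{Z}$ let $F_s=\{i\in\{1,\dots,n-2\}: s=-\lfloor f(i)/(n-1)\rfloor\}$. Then for every $1\le i\le n-2$ and every integer $s$, $i\in F_s$ if and only if $n-1-i\in F_{2-s}$. *)

theory Defs
  imports Complex_Main
begin

definition fval :: "int \<Rightarrow> int \<Rightarrow> int \<Rightarrow> int" where
  "fval a x i = a * (i div (a + 2)) - (2 * x - 1) * (i mod (a + 2))"

definition Fset :: "int \<Rightarrow> int \<Rightarrow> int \<Rightarrow> int set" where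
  "Fset a x s = {i \<in> {1 .. x * (a + 2) - 2}.
      s = - floor (of_int (fval a x i) / (of_int (x * (a + 2) - 1) :: real))}"

end

theory Submission
  imports Defs
begin

text \<open>Write \<open>N = n - 1\<close> and \<open>b = a + 2\<close>. The reflection \<open>i \<mapsto> N - i\<close> replaces the digits
  \<open>(r, p)\<close> of \<open>i\<close> in base \<open>b\<close> by \<open>(x - 1 - r, b - 1 - p)\<close>, which turns \<open>f(i)\<close> into
  \<open>-N - f(i)\<close>. Moreover \<open>b f(i) = a i - 2 p N\<close>, so \<open>N\<close> divides \<open>f(i)\<close> only if it divides
  \<open>a i\<close>, which is impossible for \<open>0 < i < N\<close> as \<open>N\<close> is coprime to \<open>a\<close>. For an integer \<open>f\<close>
  not divisible by \<open>N\<close> one has \<open>\<lfloor>(-N - f)/N\<rfloor> = -2 - \<lfloor>f/N\<rfloor>\<close>, which exchanges \<open>s\<close> and \<open>2 - s\<close>.\<close>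

lemma zdiv_reflect:
  fixes b m i :: int
  assumes "0 < b"
  shows "(b * m - 1 - i) div b = m - 1 - i div b"
    and "(b * m - 1 - i) mod b = b - 1 - i mod b"
proof -
  have eq: "b * m - 1 - i = (b - 1 - i mod b) + (m - 1 - i div b) * b"
    by (simp add: algebra_simps minus_mod_eq_mult_div)
  have "0 \<le> i mod b" "i mod b < b"
    using assms by simp_all
  then have "0 \<le> b - 1 - i mod b" "b - 1 - i mod b < b"
    by linarith+
  then show "(b * m - 1 - i) div b = m - 1 - i div b"
    and "(b * m - 1 - i) mod b = b - 1 - i mod b"
    unfolding eq by (simp_all add: div_pos_pos_trivial mod_pos_pos_trivial)
qed

lemma zdiv_minus_self_minus:
  fixes N f :: int
  assumes "0 < N" and "\<not> N dvd f"
  shows "(- N - f) div N = - 2 - f div N"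
proof -
  have "(- N - f) div N = (- f + (- 1) * N) div N"
    by (simp add: algebra_simps)
  also have "\<dots> = (- f) div N - 1"
    using div_mult_self1[of N "- f" "- 1"] assms(1) by (simp only:)
  also have "(- f) div N = - (f div N) - 1"
    using assms by (simp add: zdiv_zminus1_eq_if dvd_eq_mod_eq_0)
  finally show ?thesis by simp
qed

lemma fval_reflect:
  fixes a x i :: int
  assumes "0 < a + 2"
  shows "fval a x (x * (a + 2) - 1 - i) = - (x * (a + 2) - 1) - fval a x i"
proof -
  have reorder: "x * (a + 2) - 1 - i = (a + 2) * x - 1 - i" by (simp add: mult.commute)
  show ?thesis
    unfolding fval_def reorder zdiv_reflect[OF assms] by (simp add: algebra_simps)
qed

lemma mult_fval_eq:
  fixes a x i :: int
  shows "(a + 2) * fval a x i = a * i - 2 * (i mod (a + 2)) * (x * (a + 2) - 1)"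
proof -
  have "(a + 2) * fval a x i
      = a * ((a + 2) * (i div (a + 2)) + i mod (a + 2)) - 2 * (i mod (a + 2)) * (x * (a + 2) - 1)"
    unfolding fval_def by (simp only: algebra_simps)
  then show ?thesis by simp
qed

lemma fval_not_dvd:
  fixes a x i :: int
  assumes "coprime (x * (a + 2) - 1) a" and "0 < i" and "i < x * (a + 2) - 1"
  shows "\<not> (x * (a + 2) - 1) dvd fval a x i"
proof
  assume "(x * (a + 2) - 1) dvd fval a x i"
  moreover have "a * i = (a + 2) * fval a x i + 2 * (i mod (a + 2)) * (x * (a + 2) - 1)"
    using mult_fval_eq[of a x i] by simp
  ultimately have "(x * (a + 2) - 1) dvd a * i"
    by (simp add: dvd_add)
  then have "(x * (a + 2) - 1) dvd i"
    using assms(1) coprime_dvd_mult_right_iff by blast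
  then show False
    using assms(2,3) zdvd_imp_le by fastforce
qed

lemma mem_Fset_iff:
  "i \<in> Fset a x s \<longleftrightarrow>
     i \<in> {1 .. x * (a + 2) - 2} \<and> s = - (fval a x i div (x * (a + 2) - 1))"
  unfolding Fset_def floor_divide_of_int_eq by simp

theorem proposition4p10:
  fixes a x n :: int
  assumes "3 \<le> a" and "a \<le> x"
    and "n = x * (a + 2)"
    and "coprime (n - 1) a" and "coprime (n - 1) x"
  shows "\<forall>i \<in> {1 .. n - 2}. \<forall>s :: int.
           i \<in> Fset a x s \<longleftrightarrow> n - 1 - i \<in> Fset a x (2 - s)"
proof (intro ballI allI)
  fix i s
  assume i: "i \<in> {1 .. n - 2}"
  have "1 * 5 \<le> x * (a + 2)"
    using assms(1,2) by (intro mult_mono) auto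
  then have N_pos: "0 < x * (a + 2) - 1" by simp
  have not_dvd: "\<not> (x * (a + 2) - 1) dvd fval a x i"
    using fval_not_dvd assms(3,4) i by auto
  have "fval a x (n - 1 - i) div (n - 1) = - 2 - fval a x i div (n - 1)"
    using fval_reflect[of a x i] zdiv_minus_self_minus[OF N_pos not_dvd] assms(1,3) by simp
  then show "i \<in> Fset a x s \<longleftrightarrow> n - 1 - i \<in> Fset a x (2 - s)"
    using i assms(3) by (auto simp: mem_Fset_iff)
qed

end
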